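(* Let $N\ge3$, $p>1$, and let $g:\mathbb R^N\times\mathbb R\to\mathbb R$ be a Carathéodory function such that there exist $1<q<p$ and $\eta\in L^{p/(p-q)}(\mathbb R^N)$ with $0\le g(x,t)t\le\eta(x)|t|^q$ for a.e. $x$ and all $t$. Let $(w_n)_n,(v_n)_n\subset X$ and $v,w\in X$ be such that, for some constants $M_1,M_2>0$: $\|w_n\|_W\le M_1$ for all $n$ and $w_n\to w$ a.e. in $\mathbb R^N$; $\|v_n\|_W\le M_2$ for all $n$ and $v_n\to0$ a.e. in $\mathbb R^N$. Then $\lim_{n\to+\infty}\int_{\mathbb R^N}g(x,w_n)v_n\,dx=0$.
   Context: $X=W^{1,p}(\mathbb R^N)\cap L^\infty(\mathbb R^N)$, $\|u\|_W=(|\nabla u|_p^p+|u|_p^p)^{1/p}$. *)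

theory Defs
  imports "HOL-Analysis.Analysis"
begin

text \<open>Smooth (C-infinity) real functions on a Euclidean space: all iterated directional
  (Frechet) derivatives exist everywhere.\<close>
coinductive smooth_fun :: "('a::euclidean_space \<Rightarrow> real) \<Rightarrow> bool" where
  "f differentiable_on UNIV \<Longrightarrow> (\<forall>v. smooth_fun (\<lambda>x. frechet_derivative f (at x) v))
   \<Longrightarrow> smooth_fun f"

definition test_fun :: "('a::euclidean_space \<Rightarrow> real) \<Rightarrow> bool" where
  "test_fun \<phi> \<longleftrightarrow> smooth_fun \<phi> \<and> compact (closure {x. \<phi> x \<noteq> 0})"

definition Lp :: "real \<Rightarrow> ('a::euclidean_space \<Rightarrow> real) \<Rightarrow> bool" where
  "Lp p u \<longleftrightarrow> u \<in> borel_measurable lebesgue \<and> integrable lebesgue (\<lambda>x. \<bar>u x\<bar> powr p)"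

definition Linfty :: "('a::euclidean_space \<Rightarrow> real) \<Rightarrow> bool" where
  "Linfty u \<longleftrightarrow> u \<in> borel_measurable lebesgue \<and> (\<exists>C. AE x in lebesgue. \<bar>u x\<bar> \<le> C)"

definition weak_grad :: "('a::euclidean_space \<Rightarrow> real) \<Rightarrow> ('a \<Rightarrow> 'a) \<Rightarrow> bool" where
  "weak_grad u G \<longleftrightarrow> G \<in> borel_measurable lebesgue \<and>
     (\<forall>\<phi>. test_fun \<phi> \<longrightarrow> (\<forall>i\<in>Basis.
        (\<integral>x. u x * frechet_derivative \<phi> (at x) i \<partial>lebesgue)
          = - (\<integral>x. (G x \<bullet> i) * \<phi> x \<partial>lebesgue)))"

definition W1p :: "real \<Rightarrow> ('a::euclidean_space \<Rightarrow> real) \<Rightarrow> bool" where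
  "W1p p u \<longleftrightarrow> Lp p u \<and> (\<exists>G. weak_grad u G \<and> Lp p (\<lambda>x. norm (G x)))"

definition in_X :: "real \<Rightarrow> ('a::euclidean_space \<Rightarrow> real) \<Rightarrow> bool" where
  "in_X p u \<longleftrightarrow> W1p p u \<and> Linfty u"

text \<open>Weak gradient (unique a.e., so the norm below does not depend on the choice).\<close>
definition wgrad :: "('a::euclidean_space \<Rightarrow> real) \<Rightarrow> 'a \<Rightarrow> 'a" where
  "wgrad u = (SOME G. weak_grad u G)"

definition W_norm :: "real \<Rightarrow> ('a::euclidean_space \<Rightarrow> real) \<Rightarrow> real" where
  "W_norm p u = ((\<integral>x. norm (wgrad u x) powr p \<partial>lebesgue)
                 + (\<integral>x. \<bar>u x\<bar> powr p \<partial>lebesgue)) powr (1 / p)"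

definition caratheodory :: "('a::euclidean_space \<Rightarrow> real \<Rightarrow> real) \<Rightarrow> bool" where
  "caratheodory g \<longleftrightarrow> (\<forall>t. (\<lambda>x. g x t) \<in> borel_measurable lebesgue) \<and>
     (AE x in lebesgue. continuous_on UNIV (g x))"

end

theory Submission
  imports Defs
begin

(* The sign condition and continuity in t force g(x,0) = 0, hence |g(x,t)| <= eta(x) |t|^(q-1).
   For l > 0, Young's inequality splits eta |w_n|^(q-1) |v_n| into l |w_n|^p, small uniformly
   in n, and l^(1-r) (eta |v_n|)^r with r = p/(p-q+1).  Truncating eta |v_n| at the level
   K eta^(1+theta), theta = 1/(p-q), leaves a remainder K^(-r(p-q)) |v_n|^p, small uniformly in n
   for large K, while the truncated part is dominated by K^r eta^(p/(p-q)) and tends to 0 by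
   dominated convergence. *)

lemma powr_mult_le_Young_epsilon:
  fixes a y l \<alpha> p r :: real
  assumes "0 \<le> a" and y: "0 \<le> y" and l: "0 < l" and \<alpha>: "0 < \<alpha>" "\<alpha> < p"
    and r: "r = p / (p - \<alpha>)"
  shows "a powr \<alpha> * y \<le> l * a powr p + l powr (1 - r) * y powr r"
proof (cases "y \<le> l * a powr (p - \<alpha>)")
  case True
  have "a powr \<alpha> * y \<le> a powr \<alpha> * (l * a powr (p - \<alpha>))"
    using True by (simp add: mult_left_mono)
  also have "\<dots> = l * a powr p" by (simp add: mult.left_commute flip: powr_add)
  finally show ?thesis by (smt (verit) mult_nonneg_nonneg powr_ge_zero l)
next
  case False
  then have small: "a powr (p - \<alpha>) < y / l"
    using l by (simp add: field_simps)
  have y_pos: "0 < y"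
    using False l by (smt (verit) mult_nonneg_nonneg powr_ge_zero)
  have r_minus_1: "\<alpha> / (p - \<alpha>) = r - 1" using r \<alpha> by (simp add: field_simps)
  have "a powr \<alpha> = (a powr (p - \<alpha>)) powr (r - 1)"
    using \<alpha> by (simp add: powr_powr flip: r_minus_1)
  also have "\<dots> \<le> (y / l) powr (r - 1)"
    using small \<alpha> by (intro powr_mono2) (auto simp flip: r_minus_1)
  finally have "a powr \<alpha> * y \<le> (y / l) powr (r - 1) * y"
    using y by (rule mult_right_mono)
  also have "\<dots> = l powr (1 - r) * y powr r"
    using y_pos l by (simp add: powr_divide powr_diff field_simps)
  finally show ?thesis using l by (smt (verit) mult_nonneg_nonneg powr_ge_zero)
qed

lemma mult_powr_le_truncation:
  fixes e b K \<theta> p r :: real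
  assumes e: "0 \<le> e" and b: "0 \<le> b" and K: "0 < K" and \<theta>: "0 < \<theta>" and r: "0 < r"
    and p: "r / \<theta> + r = p"
  shows "(e * b) powr r \<le> min (e * b) (K * e powr (1 + \<theta>)) powr r + K powr (- (r / \<theta>)) * b powr p"
proof (cases "e * b \<le> K * e powr (1 + \<theta>)")
  case True
  then show ?thesis by simp
next
  case False
  then have e_pos: "0 < e" using K e by (cases "e = 0") auto
  then have "K * e powr \<theta> < b" using False by (simp add: powr_add mult_ac)
  then have b_pos: "0 < b" using K by (smt (verit) mult_pos_pos powr_gt_zero e_pos)
  have "e powr \<theta> < b / K" using \<open>K * e powr \<theta> < b\<close> K by (simp add: field_simps)
  then have "(e powr \<theta>) powr (1 / \<theta>) \<le> (b / K) powr (1 / \<theta>)"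
    using \<theta> by (intro powr_mono2) auto
  then have "e \<le> (b / K) powr (1 / \<theta>)" using \<theta> e_pos by (simp add: powr_powr)
  then have "(e * b) powr r \<le> ((b / K) powr (1 / \<theta>) * b) powr r"
    using b e r by (intro powr_mono2 mult_right_mono) auto
  also have "\<dots> = b powr (r / \<theta>) * b powr r / K powr (r / \<theta>)"
    using b_pos K by (simp add: powr_mult powr_powr powr_divide)
  also have "\<dots> = K powr (- (r / \<theta>)) * b powr p"
    by (simp add: powr_minus_divide flip: p powr_add)
  finally show ?thesis by (smt (verit) powr_ge_zero)
qed

lemma continuous_sign_condition_zero:
  fixes h :: "real \<Rightarrow> real"
  assumes "isCont h 0" and sign: "\<And>t. 0 \<le> h t * t"
  shows "h 0 = 0"
proof -
  have right: "(h \<longlongrightarrow> h 0) (at_right 0)" and left: "(h \<longlongrightarrow> h 0) (at_left 0)"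
    using assms(1) by (simp_all add: isCont_def filterlim_at_split)
  have "0 \<le> h t" if "0 < t" for t using sign[of t] that by (simp add: zero_le_mult_iff)
  then have "eventually (\<lambda>t. 0 \<le> h t) (at_right 0)"
    by (auto simp: eventually_at_right_field intro!: exI[of _ 1])
  then have "0 \<le> h 0" using right by (intro tendsto_lowerbound) auto
  have "h t \<le> 0" if "t < 0" for t using sign[of t] that by (simp add: zero_le_mult_iff)
  then have "eventually (\<lambda>t. h t \<le> 0) (at_left 0)"
    by (auto simp: eventually_at_left_field intro!: exI[of _ "-1"])
  then have "h 0 \<le> 0" using left by (intro tendsto_upperbound) auto
  with \<open>0 \<le> h 0\<close> show ?thesis by simp
qed

lemma abs_le_powr_of_sign_condition:
  fixes h :: "real \<Rightarrow> real"
  assumes "h 0 = 0" and "0 \<le> h t * t" and "h t * t \<le> e * \<bar>t\<bar> powr q"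
  shows "\<bar>h t\<bar> \<le> e * \<bar>t\<bar> powr (q - 1)"
proof (cases "t = 0")
  case False
  have "\<bar>h t\<bar> * \<bar>t\<bar> = h t * t" using assms(2) by (metis abs_mult abs_of_nonneg)
  also have "\<dots> \<le> (e * \<bar>t\<bar> powr (q - 1)) * \<bar>t\<bar>"
    using assms(3) False by (simp add: powr_diff mult_ac)
  finally show ?thesis using False by simp
qed (use assms(1) in simp)

lemma integral_abs_powr_le_W_norm:
  fixes u :: "'a::euclidean_space \<Rightarrow> real"
  assumes "W_norm p u \<le> M" and "0 < p"
  shows "(\<integral>x. \<bar>u x\<bar> powr p \<partial>lebesgue) \<le> M powr p"
proof -
  define A where "A = (\<integral>x. norm (wgrad u x) powr p \<partial>lebesgue)"
  define B where "B = (\<integral>x. \<bar>u x\<bar> powr p \<partial>lebesgue)"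
  have "0 \<le> A" "0 \<le> B" unfolding A_def B_def by (simp_all add: integral_nonneg_AE)
  then have "A + B = ((A + B) powr (1 / p)) powr p" using assms(2) by (simp add: powr_powr)
  also have "\<dots> \<le> M powr p"
    using assms unfolding W_norm_def A_def B_def by (intro powr_mono2) auto
  finally show ?thesis using \<open>0 \<le> A\<close> unfolding B_def by linarith
qed

text \<open>No integrability of \<open>f\<close> is needed: otherwise its integral is 0.\<close>
lemma abs_integral_le_AE:
  fixes f h :: "'a \<Rightarrow> real"
  assumes "integrable M h" and "AE x in M. \<bar>f x\<bar> \<le> h x"
  shows "\<bar>\<integral>x. f x \<partial>M\<bar> \<le> (\<integral>x. h x \<partial>M)"
proof -
  have "AE x in M. 0 \<le> h x" using assms(2) by eventually_elim auto
  then have "(\<integral>x. f x \<partial>M) \<le> (\<integral>x. h x \<partial>M)" and "(\<integral>x. - f x \<partial>M) \<le> (\<integral>x. h x \<partial>M)"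
    using assms by (intro integral_mono_AE'; auto elim: eventually_mono)+
  then show ?thesis by simp
qed

lemma integral_min_powr_tendsto_zero:
  fixes a :: "nat \<Rightarrow> 'a \<Rightarrow> real" and b :: "'a \<Rightarrow> real"
  assumes [measurable]: "\<And>n. a n \<in> borel_measurable M" "b \<in> borel_measurable M"
    and "integrable M (\<lambda>x. b x powr r)" and "0 < r"
    and "AE x in M. (\<lambda>n. a n x) \<longlonglongrightarrow> 0"
    and "AE x in M. \<forall>n. 0 \<le> a n x" and "AE x in M. 0 \<le> b x"
  shows "(\<lambda>n. \<integral>x. min (a n x) (b x) powr r \<partial>M) \<longlonglongrightarrow> 0"
proof -
  have "AE x in M. (\<lambda>n. min (a n x) (b x) powr r) \<longlonglongrightarrow> 0"
    using assms(5-7)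
  proof eventually_elim
    case (elim x)
    have "(\<lambda>n. min (a n x) (b x)) \<longlonglongrightarrow> min 0 (b x)" by (intro tendsto_intros elim(1))
    then show ?case using elim \<open>0 < r\<close> by (intro tendsto_zero_powrI[where b = r]) auto
  qed
  moreover have "AE x in M. norm (min (a n x) (b x) powr r) \<le> b x powr r" for n
    using assms(6,7) by eventually_elim (simp add: powr_mono2 \<open>0 < r\<close> less_imp_le)
  ultimately have "(\<lambda>n. \<integral>x. min (a n x) (b x) powr r \<partial>M) \<longlonglongrightarrow> (\<integral>x. 0 \<partial>M)"
    using assms(3) by (intro integral_dominated_convergence[where w = "\<lambda>x. b x powr r"]) auto
  then show ?thesis by simp
qed

lemma tendsto_zero_by_parametrized_bounds:
  fixes I :: "nat \<Rightarrow> real" and D :: "real \<Rightarrow> nat \<Rightarrow> real" and C E :: "real \<Rightarrow> real"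
  assumes bound: "\<And>l K n. 0 < l \<Longrightarrow> 0 < K \<Longrightarrow> \<bar>I n\<bar> \<le> l * A + C l * (D K n + E K)"
    and D: "\<And>K. 0 < K \<Longrightarrow> D K \<longlonglongrightarrow> 0"
    and E: "(E \<longlongrightarrow> 0) at_top"
  shows "I \<longlonglongrightarrow> 0"
proof (rule LIMSEQ_I)
  fix \<epsilon> :: real assume "0 < \<epsilon>"
  define l where "l = \<epsilon> / (3 * (\<bar>A\<bar> + 1))"
  have "0 < l" unfolding l_def using \<open>0 < \<epsilon>\<close> by simp
  have "l * A \<le> l * \<bar>A\<bar>" using \<open>0 < l\<close> by (simp add: mult_left_mono)
  also have "\<dots> < l * (\<bar>A\<bar> + 1)" using \<open>0 < l\<close> by simp
  also have "\<dots> = \<epsilon> / 3" unfolding l_def by (simp add: field_simps add_pos_nonneg)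
  finally have l: "0 < l" "l * A < \<epsilon> / 3" using \<open>0 < l\<close> by auto
  have CE: "((\<lambda>K. C l * E K) \<longlongrightarrow> 0) at_top" using tendsto_mult_right_zero[OF E] .
  have "eventually (\<lambda>K. \<bar>C l * E K\<bar> < \<epsilon> / 3) at_top"
    using tendsto_iff[THEN iffD1, OF CE, rule_format, of "\<epsilon> / 3"] \<open>0 < \<epsilon>\<close> by simp
  then have "eventually (\<lambda>K. 0 < K \<and> \<bar>C l * E K\<bar> < \<epsilon> / 3) at_top"
    by (intro eventually_conj eventually_gt_at_top)
  then obtain K where K: "0 < K" "\<bar>C l * E K\<bar> < \<epsilon> / 3"
    using eventually_happens'[OF trivial_limit_at_top_linorder] by blast
  have CD: "(\<lambda>n. C l * D K n) \<longlonglongrightarrow> 0" using tendsto_mult_right_zero[OF D[OF K(1)]] .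
  obtain N where N: "\<And>n. N \<le> n \<Longrightarrow> \<bar>C l * D K n\<bar> < \<epsilon> / 3"
    using tendsto_iff[THEN iffD1, OF CD, rule_format, of "\<epsilon> / 3"] \<open>0 < \<epsilon>\<close>
    by (auto simp: eventually_sequentially)
  have "\<bar>I n\<bar> < \<epsilon>" if "N \<le> n" for n
  proof -
    have "\<bar>I n\<bar> \<le> l * A + C l * D K n + C l * E K"
      using bound[OF l(1) K(1), of n] by (simp add: distrib_left)
    then show ?thesis using l(2) K(2) N[OF that] by linarith
  qed
  then show "\<exists>N. \<forall>n\<ge>N. norm (I n - 0) < \<epsilon>" by auto
qed

lemma abs_mult_le_Young_truncation:
  fixes G e w v l K \<alpha> \<theta> p r :: real
  assumes e: "0 \<le> e" and G: "\<bar>G\<bar> \<le> e * \<bar>w\<bar> powr \<alpha>" and l: "0 < l" and K: "0 < K"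
    and \<alpha>: "0 < \<alpha>" "\<alpha> < p" and \<theta>: "0 < \<theta>"
    and r: "r = p / (p - \<alpha>)" and p: "r / \<theta> + r = p"
  shows "\<bar>G * v\<bar> \<le> l * \<bar>w\<bar> powr p
    + l powr (1 - r) * (min (e * \<bar>v\<bar>) (K * e powr (1 + \<theta>)) powr r + K powr (- (r / \<theta>)) * \<bar>v\<bar> powr p)"
proof -
  have "\<bar>G * v\<bar> \<le> e * \<bar>w\<bar> powr \<alpha> * \<bar>v\<bar>" using G by (simp add: abs_mult mult_right_mono)
  also have "\<dots> = \<bar>w\<bar> powr \<alpha> * (e * \<bar>v\<bar>)" by simp
  also have "\<dots> \<le> l * \<bar>w\<bar> powr p + l powr (1 - r) * (e * \<bar>v\<bar>) powr r"
    using e l \<alpha> r by (intro powr_mult_le_Young_epsilon) auto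
  also have "(e * \<bar>v\<bar>) powr r
      \<le> min (e * \<bar>v\<bar>) (K * e powr (1 + \<theta>)) powr r + K powr (- (r / \<theta>)) * \<bar>v\<bar> powr p"
    using e K \<theta> \<alpha> p r by (intro mult_powr_le_truncation) auto
  finally show ?thesis by (simp add: mult_left_mono)
qed

lemma abs_integral_mult_le_Young_truncation:
  fixes G :: "'a \<Rightarrow> real \<Rightarrow> real" and \<eta> u v :: "'a \<Rightarrow> real"
  assumes growth: "AE x in M. \<forall>t. \<bar>G x t\<bar> \<le> \<eta> x * \<bar>t\<bar> powr \<alpha>"
    and u: "integrable M (\<lambda>x. \<bar>u x\<bar> powr p)" and v: "integrable M (\<lambda>x. \<bar>v x\<bar> powr p)"
    and trunc: "integrable M (\<lambda>x. min (\<bar>\<eta> x\<bar> * \<bar>v x\<bar>) (K * \<bar>\<eta> x\<bar> powr (1 + \<theta>)) powr r)"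
    and l: "0 < l" and K: "0 < K" and \<alpha>: "0 < \<alpha>" "\<alpha> < p" and \<theta>: "0 < \<theta>"
    and r: "r = p / (p - \<alpha>)" and p: "r / \<theta> + r = p"
  shows "\<bar>\<integral>x. G x (u x) * v x \<partial>M\<bar> \<le> l * (\<integral>x. \<bar>u x\<bar> powr p \<partial>M)
    + l powr (1 - r) * ((\<integral>x. min (\<bar>\<eta> x\<bar> * \<bar>v x\<bar>) (K * \<bar>\<eta> x\<bar> powr (1 + \<theta>)) powr r \<partial>M)
      + K powr (- (r / \<theta>)) * (\<integral>x. \<bar>v x\<bar> powr p \<partial>M))"
    (is "_ \<le> ?rhs")
proof -
  define h where "h x = l * \<bar>u x\<bar> powr p + l powr (1 - r)
    * (min (\<bar>\<eta> x\<bar> * \<bar>v x\<bar>) (K * \<bar>\<eta> x\<bar> powr (1 + \<theta>)) powr r + K powr (- (r / \<theta>)) * \<bar>v x\<bar> powr p)"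
    for x
  have "integrable M h" unfolding h_def using u v trunc by auto
  moreover have "AE x in M. \<bar>G x (u x) * v x\<bar> \<le> h x"
    using growth
  proof eventually_elim
    case (elim x)
    then have "\<bar>G x (u x)\<bar> \<le> \<bar>\<eta> x\<bar> * \<bar>u x\<bar> powr \<alpha>"
      by (meson abs_ge_self mult_right_mono order_trans powr_ge_zero)
    then show ?case
      unfolding h_def by (rule abs_mult_le_Young_truncation[OF abs_ge_zero _ l K \<alpha> \<theta> r p])
  qed
  ultimately have "\<bar>\<integral>x. G x (u x) * v x \<partial>M\<bar> \<le> (\<integral>x. h x \<partial>M)"
    by (rule abs_integral_le_AE)
  also have "\<dots> = ?rhs" unfolding h_def using u v trunc by simp
  finally show ?thesis .
qed

lemma subcritical_exponents:
  fixes p q :: real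
  assumes "1 < q" and "q < p"
  shows "0 < 1 / (p - q)" and "0 < p / (p - q + 1)"
    and "p / (p - q + 1) / (1 / (p - q)) + p / (p - q + 1) = p"
    and "(1 + 1 / (p - q)) * (p / (p - q + 1)) = p / (p - q)"
proof -
  have "0 < p - q" "0 < p - q + 1" using assms by simp_all
  then show "0 < 1 / (p - q)" "0 < p / (p - q + 1)" using assms by simp_all
  have "p / (p - q + 1) / (1 / (p - q)) + p / (p - q + 1) = p / (p - q + 1) * (p - q + 1)"
    by (simp add: distrib_left)
  then show "p / (p - q + 1) / (1 / (p - q)) + p / (p - q + 1) = p"
    using \<open>0 < p - q + 1\<close> by simp
  have "1 + 1 / (p - q) = (p - q + 1) / (p - q)" using \<open>0 < p - q\<close> by (simp add: field_simps)
  then show "(1 + 1 / (p - q)) * (p / (p - q + 1)) = p / (p - q)" using \<open>0 < p - q + 1\<close> by simp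
qed

lemma integral_subcritical_product_tendsto_zero:
  fixes G :: "'a \<Rightarrow> real \<Rightarrow> real" and \<eta> :: "'a \<Rightarrow> real" and u v :: "nat \<Rightarrow> 'a \<Rightarrow> real"
  assumes q: "1 < q" "q < p"
    and \<eta>: "\<eta> \<in> borel_measurable M" "integrable M (\<lambda>x. \<bar>\<eta> x\<bar> powr (p / (p - q)))"
    and growth: "AE x in M. \<forall>t. \<bar>G x t\<bar> \<le> \<eta> x * \<bar>t\<bar> powr (q - 1)"
    and u: "\<And>n. integrable M (\<lambda>x. \<bar>u n x\<bar> powr p)" "\<And>n. (\<integral>x. \<bar>u n x\<bar> powr p \<partial>M) \<le> A"
    and v: "\<And>n. v n \<in> borel_measurable M" "\<And>n. integrable M (\<lambda>x. \<bar>v n x\<bar> powr p)"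
      "\<And>n. (\<integral>x. \<bar>v n x\<bar> powr p \<partial>M) \<le> B"
    and v_null: "AE x in M. (\<lambda>n. v n x) \<longlonglongrightarrow> 0"
  shows "(\<lambda>n. \<integral>x. G x (u n x) * v n x \<partial>M) \<longlonglongrightarrow> 0"
proof -
  define \<theta> where "\<theta> = 1 / (p - q)"
  define r where "r = p / (p - q + 1)"
  have \<theta>: "0 < \<theta>" and r_pos: "0 < r" and r_\<theta>: "r / \<theta> + r = p"
    and r_s: "(1 + \<theta>) * r = p / (p - q)"
    unfolding \<theta>_def r_def by (fact subcritical_exponents[OF q])+
  define F where "F K n x = min (\<bar>\<eta> x\<bar> * \<bar>v n x\<bar>) (K * \<bar>\<eta> x\<bar> powr (1 + \<theta>)) powr r" for K n x
  have dominant: "integrable M (\<lambda>x. (K * \<bar>\<eta> x\<bar> powr (1 + \<theta>)) powr r)" if "0 < K" for K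
    using \<eta>(2) that by (simp add: powr_mult powr_powr r_s)
  have F_integrable: "integrable M (F K n)" if "0 < K" for K n
    using dominant[OF that] unfolding F_def
  proof (rule Bochner_Integration.integrable_bound)
    show "(\<lambda>x. min (\<bar>\<eta> x\<bar> * \<bar>v n x\<bar>) (K * \<bar>\<eta> x\<bar> powr (1 + \<theta>)) powr r) \<in> borel_measurable M"
      using \<eta>(1) v(1) by measurable
  qed (use that r_pos in \<open>auto intro!: powr_mono2\<close>)
  have F_tendsto: "(\<lambda>n. \<integral>x. F K n x \<partial>M) \<longlonglongrightarrow> 0" if "0 < K" for K
  proof -
    note dominant[OF that]
    moreover have "AE x in M. (\<lambda>n. \<bar>\<eta> x\<bar> * \<bar>v n x\<bar>) \<longlonglongrightarrow> 0"
      using v_null by eventually_elim (intro tendsto_mult_right_zero tendsto_rabs_zero)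
    ultimately show ?thesis unfolding F_def using \<eta>(1) v(1) r_pos \<open>0 < K\<close>
      by (intro integral_min_powr_tendsto_zero) auto
  qed
  have bound: "\<bar>\<integral>x. G x (u n x) * v n x \<partial>M\<bar>
      \<le> l * A + l powr (1 - r) * ((\<integral>x. F K n x \<partial>M) + K powr (- (r / \<theta>)) * B)"
    if "0 < l" "0 < K" for l K n
  proof -
    have "\<bar>\<integral>x. G x (u n x) * v n x \<partial>M\<bar> \<le> l * (\<integral>x. \<bar>u n x\<bar> powr p \<partial>M)
        + l powr (1 - r) * ((\<integral>x. F K n x \<partial>M) + K powr (- (r / \<theta>)) * (\<integral>x. \<bar>v n x\<bar> powr p \<partial>M))"
      unfolding F_def using q
      by (intro abs_integral_mult_le_Young_truncation[OF growth u(1) v(2)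
            F_integrable[OF \<open>0 < K\<close>, unfolded F_def] that _ _ \<theta> _ r_\<theta>])
        (simp_all add: r_def diff_diff_eq2)
    also have "\<dots> \<le> l * A + l powr (1 - r) * ((\<integral>x. F K n x \<partial>M) + K powr (- (r / \<theta>)) * B)"
      using u(2) v(3) \<open>0 < l\<close> by (intro add_mono mult_left_mono) auto
    finally show ?thesis .
  qed
  have remainder: "((\<lambda>K. K powr (- (r / \<theta>)) * B) \<longlongrightarrow> 0) at_top"
    using r_pos \<theta> by (intro tendsto_mult_left_zero tendsto_neg_powr) (auto simp: filterlim_ident)
  show ?thesis using tendsto_zero_by_parametrized_bounds[OF bound F_tendsto remainder] .
qed

theorem lemma4p8:
  fixes g :: "'a::euclidean_space \<Rightarrow> real \<Rightarrow> real"
    and p q M1 M2 :: real and \<eta> :: "'a \<Rightarrow> real"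
    and w v :: "'a \<Rightarrow> real" and ws vs :: "nat \<Rightarrow> 'a \<Rightarrow> real"
  assumes "DIM('a) \<ge> 3" and "p > 1"
    and "caratheodory g"
    and "1 < q" and "q < p"
    and "Lp (p / (p - q)) \<eta>"
    and "AE x in lebesgue. \<forall>t. 0 \<le> g x t * t \<and> g x t * t \<le> \<eta> x * \<bar>t\<bar> powr q"
    and "\<And>n. in_X p (ws n)" and "\<And>n. in_X p (vs n)"
    and "in_X p w" and "in_X p v"
    and "M1 > 0" and "M2 > 0"
    and "\<And>n. W_norm p (ws n) \<le> M1"
    and "AE x in lebesgue. (\<lambda>n. ws n x) \<longlonglongrightarrow> w x"
    and "\<And>n. W_norm p (vs n) \<le> M2"
    and "AE x in lebesgue. (\<lambda>n. vs n x) \<longlonglongrightarrow> 0"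
  shows "(\<lambda>n. \<integral>x. g x (ws n x) * vs n x \<partial>lebesgue) \<longlonglongrightarrow> 0"
proof -
  have "AE x in lebesgue. continuous_on UNIV (g x)" using assms(3) by (simp add: caratheodory_def)
  then have growth: "AE x in lebesgue. \<forall>t. \<bar>g x t\<bar> \<le> \<eta> x * \<bar>t\<bar> powr (q - 1)"
    using assms(7)
  proof eventually_elim
    case (elim x)
    then have "g x 0 = 0"
      by (intro continuous_sign_condition_zero) (auto simp: continuous_on_eq_continuous_at)
    with elim show ?case by (auto intro: abs_le_powr_of_sign_condition)
  qed
  have X_Lp: "u \<in> borel_measurable lebesgue \<and> integrable lebesgue (\<lambda>x. \<bar>u x\<bar> powr p)"
    if "in_X p u" for u :: "'a \<Rightarrow> real"
    using that unfolding in_X_def W1p_def Lp_def by auto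
  show ?thesis
  proof (rule integral_subcritical_product_tendsto_zero
      [where G = g and u = ws and v = vs and A = "M1 powr p" and B = "M2 powr p"])
    show "\<eta> \<in> borel_measurable lebesgue" "integrable lebesgue (\<lambda>x. \<bar>\<eta> x\<bar> powr (p / (p - q)))"
      using assms(6) unfolding Lp_def by auto
    show "(\<integral>x. \<bar>ws n x\<bar> powr p \<partial>lebesgue) \<le> M1 powr p"
      and "(\<integral>x. \<bar>vs n x\<bar> powr p \<partial>lebesgue) \<le> M2 powr p" for n
      using assms(2,14,16) by (simp_all add: integral_abs_powr_le_W_norm)
  qed (use assms(4,5,8,9,17) growth X_Lp in auto)
qed

end
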